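(* Let $G$ be a $K_4$-free disk graph, let $\mathsf{opt}>0$ be the minimum size of an odd cycle transversal of $G$, let $\mathcal{T}$ be a maximal packing of the triangles of $G$, and let $\mathcal{O}$ be the set of triangles $T$ of $G$ with $T\not\subseteq V(\mathcal{T})$. Let $\mathsf{tri}(\mathcal{O})$ be the maximum size of a packing of $\mathcal{O}$, and put $a=|\mathcal{T}|/\mathsf{opt}$, $b=\mathsf{tri}(\mathcal{O})/\mathsf{opt}$. Let $d$ be the average degree of $G[V(\mathcal{T})]$. Let $1\le\rho_0\le 3$. Independently for each $T\in\mathcal{T}$ choose $v_T\in T$ uniformly at random, and let $R=\bigcup_{T\in\mathcal{T}}(T\setminus\{v_T\})$. Let $\mathcal{T}'$ be any maximal packing of the triangles of $G-R$, let $X_2$ be an odd cycle transversal of $G-(R\cup V(\mathcal{T}'))$ of size at most $\rho_0$ times the minimum size of an odd cycle transversal of that graph, and set $S_2=R\cup V(\mathcal{T}')\cup X_2$. Then $$\mathbb{E}[|S_2|]\le \Big(\rho_0+\big(1-(\tfrac13)^{\frac38 d+\frac14}\big)(3-\rho_0)\,a+(3-\rho_0)\,b\Big)\cdot\mathsf{opt}.$$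
   Context: A disk graph is the intersection graph of a finite set of closed disks in the plane; $K_4$-free means no complete subgraph on 4 vertices. An odd cycle transversal of $G$ is a set $S\subseteq V(G)$ with $G-S$ bipartite. A triangle is a set of three pairwise adjacent vertices; a packing of a family of triangles is a subfamily of pairwise vertex-disjoint triangles, maximal if no further triangle of the family can be added; $V(\mathcal{T})$ denotes the union of the triangles in $\mathcal{T}$. In the paper $X_2$ is produced by a $\rho_0$-approximation algorithm for \textsc{Bipartization} on planar graphs. *)

theory Defs
  imports "HOL-Analysis.Analysis" "HOL-Library.FuncSet"
begin

text \<open>Graphs: a finite vertex set V and an adjacency predicate E (only its
restriction to V matters). G - S is represented by the vertex set V - S
with the same adjacency (induced subgraph).\<close>

definition disk_graph :: "'a set \<Rightarrow> ('a \<Rightarrow> 'a \<Rightarrow> bool) \<Rightarrow> bool" where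
  "disk_graph V E \<longleftrightarrow> finite V \<and>
     (\<exists>(c :: 'a \<Rightarrow> complex) (r :: 'a \<Rightarrow> real).
        (\<forall>v\<in>V. r v > 0) \<and> inj_on (\<lambda>v. (c v, r v)) V \<and>
        (\<forall>u\<in>V. \<forall>v\<in>V. E u v \<longleftrightarrow> u \<noteq> v \<and> dist (c u) (c v) \<le> r u + r v))"

definition K4_free :: "'a set \<Rightarrow> ('a \<Rightarrow> 'a \<Rightarrow> bool) \<Rightarrow> bool" where
  "K4_free V E \<longleftrightarrow> \<not> (\<exists>w\<in>V. \<exists>x\<in>V. \<exists>y\<in>V. \<exists>z\<in>V.
      distinct [w, x, y, z] \<and> E w x \<and> E w y \<and> E w z \<and> E x y \<and> E x z \<and> E y z)"

definition triangles :: "'a set \<Rightarrow> ('a \<Rightarrow> 'a \<Rightarrow> bool) \<Rightarrow> 'a set set" where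
  "triangles W E = {T. \<exists>x\<in>W. \<exists>y\<in>W. \<exists>z\<in>W. T = {x, y, z} \<and> distinct [x, y, z]
                          \<and> E x y \<and> E x z \<and> E y z}"

definition bipartite :: "'a set \<Rightarrow> ('a \<Rightarrow> 'a \<Rightarrow> bool) \<Rightarrow> bool" where
  "bipartite W E \<longleftrightarrow> (\<exists>A \<subseteq> W. \<forall>u\<in>W. \<forall>v\<in>W. E u v \<longrightarrow> (u \<in> A \<longleftrightarrow> v \<notin> A))"

definition is_oct :: "'a set \<Rightarrow> ('a \<Rightarrow> 'a \<Rightarrow> bool) \<Rightarrow> 'a set \<Rightarrow> bool" where
  "is_oct W E S \<longleftrightarrow> S \<subseteq> W \<and> bipartite (W - S) E"

definition oct_num :: "'a set \<Rightarrow> ('a \<Rightarrow> 'a \<Rightarrow> bool) \<Rightarrow> nat" where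
  "oct_num W E = Min {card S | S. is_oct W E S}"

definition packing :: "'a set set \<Rightarrow> 'a set set \<Rightarrow> bool" where
  "packing F P \<longleftrightarrow> P \<subseteq> F \<and> (\<forall>T1\<in>P. \<forall>T2\<in>P. T1 \<noteq> T2 \<longrightarrow> T1 \<inter> T2 = {})"

definition maximal_packing :: "'a set set \<Rightarrow> 'a set set \<Rightarrow> bool" where
  "maximal_packing F P \<longleftrightarrow> packing F P \<and>
     \<not> (\<exists>T\<in>F - P. packing F (insert T P))"

definition tri_num :: "'a set set \<Rightarrow> nat" where
  "tri_num F = Max {card P | P. packing F P}"

text \<open>Average degree of the induced subgraph G[U] (0 if U is empty).\<close>
definition avg_degree :: "'a set \<Rightarrow> ('a \<Rightarrow> 'a \<Rightarrow> bool) \<Rightarrow> real" where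
  "avg_degree U E = (\<Sum>v\<in>U. real (card {u\<in>U. E v u})) / real (card U)"

end

theory Submission
  imports Defs
begin

(* Fix an optimal odd cycle transversal X and a choice sigma of kept vertices. Every triangle of
   G - R meets X; those outside V(T) form a packing of O and cost at most 3 - rho0 each, while
   every non-X vertex of a triangle inside V(T) is the kept vertex of a triangle of T that is
   adjacent to a kept X-vertex of another triangle of T ("exposed"). Together with
   |X2| <= rho0 |X - (R u V(T'))| this charges |S2| to rho0 |X| + (3 - rho0) tri(O) plus a cost of
   each triangle of T. Averaged over sigma, a triangle T with one X-vertex costs
   (3 - rho0) (1 - gain T), where 2 gain T is the probability that its kept vertex v is outside X
   and not exposed; by K4-freeness every other triangle contains at most two X-neighbours of v,
   so this probability is at least (1/3) sum_v 3^(-r v / 2), with r v the number of X-neighbours of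
   v in other triangles. Convexity of exp and the double-counting bound
   2 sum_v r v <= (sum of degrees into other triangles) give sum_T gain T >= (1/3)^(3d/8 + 1/4) |T|. *)

section \<open>Triangles, packings and odd cycle transversals\<close>

lemma triangle_subset: "t \<in> triangles W E \<Longrightarrow> t \<subseteq> W"
  unfolding triangles_def by auto

lemma card_triangle: "t \<in> triangles W E \<Longrightarrow> card t = 3"
  unfolding triangles_def by auto

lemma finite_triangle: "t \<in> triangles W E \<Longrightarrow> finite t"
  unfolding triangles_def by auto

lemma triangles_mono: "W \<subseteq> W' \<Longrightarrow> triangles W E \<subseteq> triangles W' E"
  unfolding triangles_def by blast

lemma triangle_adj:
  assumes "t \<in> triangles W E" "\<And>u v. u \<in> W \<Longrightarrow> v \<in> W \<Longrightarrow> E u v \<longleftrightarrow> E v u"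
    and "a \<in> t" "b \<in> t" "a \<noteq> b"
  shows "E a b"
  using assms unfolding triangles_def by auto

lemma is_oct_meets_triangle:
  assumes "is_oct W E S" "t \<in> triangles W E"
  shows "t \<inter> S \<noteq> {}"
proof
  assume disj: "t \<inter> S = {}"
  obtain A where A: "\<forall>u\<in>W - S. \<forall>v\<in>W - S. E u v \<longrightarrow> (u \<in> A \<longleftrightarrow> v \<notin> A)"
    using assms(1) unfolding is_oct_def bipartite_def by blast
  obtain x y z where "x \<in> W" "y \<in> W" "z \<in> W" "t = {x, y, z}" "E x y" "E x z" "E y z"
    using assms(2) unfolding triangles_def by blast
  then have "x \<in> W - S" "y \<in> W - S" "z \<in> W - S" "E x y" "E x z" "E y z"
    using disj by auto
  then show False using A by blast
qed

lemma is_oct_Int: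
  assumes "is_oct V E S" "W \<subseteq> V"
  shows "is_oct W E (S \<inter> W)"
proof -
  obtain A where "A \<subseteq> V - S" "\<forall>u\<in>V - S. \<forall>v\<in>V - S. E u v \<longrightarrow> (u \<in> A \<longleftrightarrow> v \<notin> A)"
    using assms(1) unfolding is_oct_def bipartite_def by blast
  then have "bipartite (W - S \<inter> W) E"
    unfolding bipartite_def using assms(2) by (intro exI[of _ "A \<inter> W"]) auto
  then show ?thesis unfolding is_oct_def by blast
qed

lemma finite_oct_cards: "finite W \<Longrightarrow> finite {card S | S. is_oct W E S}"
  by (rule finite_surj[of "Pow W" _ card]) (auto simp: is_oct_def)

lemma oct_num_le: "finite W \<Longrightarrow> is_oct W E S \<Longrightarrow> oct_num W E \<le> card S"
  unfolding oct_num_def by (rule Min_le) (auto simp: finite_oct_cards)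

lemma oct_num_le_Int: "finite V \<Longrightarrow> is_oct V E S \<Longrightarrow> W \<subseteq> V \<Longrightarrow> oct_num W E \<le> card (S \<inter> W)"
  using finite_subset by (blast intro: oct_num_le is_oct_Int)

lemma oct_num_attained:
  assumes "finite W"
  obtains S where "is_oct W E S" "card S = oct_num W E"
proof -
  have "is_oct W E W" unfolding is_oct_def bipartite_def by blast
  then have "oct_num W E \<in> {card S | S. is_oct W E S}"
    unfolding oct_num_def using assms by (intro Min_in finite_oct_cards) auto
  then show ?thesis using that by auto
qed

lemma tri_num_ge:
  assumes "finite F" "packing F P"
  shows "card P \<le> tri_num F"
  unfolding tri_num_def
proof (rule Max_ge)
  show "finite {card P |P. packing F P}"
    by (rule finite_surj[of "Pow F" _ card]) (use assms(1) in \<open>auto simp: packing_def\<close>)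
qed (use assms(2) in blast)

lemma finite_packing_triangles:
  assumes "finite W" "packing (triangles W E) P"
  shows "finite P"
proof (rule finite_subset)
  show "P \<subseteq> Pow W"
    using assms(2) triangle_subset[of _ W E] unfolding packing_def by blast
qed (simp add: assms(1))

lemma card_Int_Union_packing:
  assumes "finite W" "packing (triangles W E) P"
  shows "card (S \<inter> \<Union>P) = (\<Sum>t\<in>P. card (S \<inter> t))"
proof -
  have P: "P \<subseteq> triangles W E" "\<And>t t'. t \<in> P \<Longrightarrow> t' \<in> P \<Longrightarrow> t \<noteq> t' \<Longrightarrow> t \<inter> t' = {}"
    using assms(2) unfolding packing_def by auto
  have "S \<inter> \<Union>P = (\<Union>t\<in>P. S \<inter> t)" by blast
  also have "card \<dots> = (\<Sum>t\<in>P. card (S \<inter> t))"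
  proof (rule card_UN_disjoint)
    show "\<forall>t\<in>P. finite (S \<inter> t)"
      using P(1) finite_triangle[of _ W E] by blast
    show "\<forall>t\<in>P. \<forall>t'\<in>P. t \<noteq> t' \<longrightarrow> S \<inter> t \<inter> (S \<inter> t') = {}"
      using P(2) by blast
  qed (rule finite_packing_triangles[OF assms])
  finally show ?thesis .
qed

lemma K4_free_card_nbrs_in_triangle:
  assumes "K4_free V E" "t \<in> triangles V E" "v \<in> V" "v \<notin> t"
  shows "card {x \<in> t. E v x} \<le> 2"
proof -
  obtain x y z where t: "x \<in> V" "y \<in> V" "z \<in> V" "t = {x, y, z}" "distinct [x, y, z]"
      "E x y" "E x z" "E y z"
    using assms(2) unfolding triangles_def by blast
  have "distinct [v, x, y, z]"
    using t assms(4) by auto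
  then have "\<not> (E v x \<and> E v y \<and> E v z)"
    using assms(1,3) t(1-3,6-8) unfolding K4_free_def by blast
  then obtain a b where "{x \<in> t. E v x} \<subseteq> {a, b}"
    using t(4) by blast
  then have "card {x \<in> t. E v x} \<le> card {a, b}"
    by (rule card_mono[rotated]) simp
  also have "\<dots> \<le> 2"
    by (simp add: card_insert_if)
  finally show ?thesis .
qed

lemma card_Int_partition3:
  assumes "finite X" "X \<subseteq> V" "R \<inter> U = {}"
  shows "card X = card (X \<inter> R) + card (X \<inter> U) + card (X \<inter> (V - (R \<union> U)))"
proof -
  have "card X = card (X \<inter> R \<union> X \<inter> U \<union> X \<inter> (V - (R \<union> U)))"
    using assms(2) by (intro arg_cong[where f = card]) blast
  also have "\<dots> = card (X \<inter> R \<union> X \<inter> U) + card (X \<inter> (V - (R \<union> U)))"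
    using assms(1) by (intro card_Un_disjoint) auto
  also have "card (X \<inter> R \<union> X \<inter> U) = card (X \<inter> R) + card (X \<inter> U)"
    using assms(1,3) by (intro card_Un_disjoint) auto
  finally show ?thesis .
qed

lemma exp_ge_tangent: "exp (- a) * (1 - (x - a)) \<le> exp (- x)" for a x :: real
proof -
  have "exp (- x) = exp (- a) * exp (- (x - a))" by (simp flip: exp_add)
  moreover have "1 - (x - a) \<le> exp (- (x - a))"
    using exp_ge_add_one_self[of "- (x - a)"] by linarith
  ultimately show ?thesis by (simp add: mult_left_mono)
qed

lemma exp_neg_half_ln3_le:
  assumes "k \<le> 2"
  shows "exp (- (ln 3 / 2 * real k)) \<le> (3 - real k) / 3"
proof -
  have "exp (- (ln 3 / 2)) ^ 2 = exp (- ln (3::real))"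
    by (subst exp_of_nat_mult[of 2, symmetric]) simp
  then have sq: "exp (- (ln 3 / 2)) ^ 2 = 1 / (3::real)"
    by (simp add: exp_minus)
  have "exp (- (ln 3 / 2)) \<le> 2 / (3::real)"
    by (rule power2_le_imp_le) (simp_all add: sq power_divide)
  moreover have "k = 0 \<or> k = 1 \<or> k = 2" using assms by auto
  ultimately show ?thesis using sq by (auto simp flip: exp_of_nat_mult)
qed

lemma triangle_charge_le:
  fixes \<rho> :: real
  assumes "1 \<le> \<rho>" "\<rho> \<le> 3" "1 \<le> k" "k + j = (3::nat)"
  shows "3 - \<rho> * k \<le> (3 - \<rho>) / 2 * j"
proof -
  have "k = 1 \<and> j = 2 \<or> k = 2 \<and> j = 1 \<or> k = 3 \<and> j = 0" using assms(3,4) by arith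
  then show ?thesis using assms(1,2) by auto
qed

lemma card_PiE_fibres:
  assumes "finite I" "i \<in> I" "S \<subseteq> A i" "\<And>j. j \<in> I \<Longrightarrow> finite (A j)"
  shows "card {f \<in> Pi\<^sub>E I A. f i \<in> S \<and> (\<forall>j\<in>I - {i}. f j \<notin> Y (f i))}
           = (\<Sum>a\<in>S. \<Prod>j\<in>I - {i}. card (A j - Y a))"
proof -
  define B where "B a j = (if j = i then {a} else A j - Y a)" for a j
  have fibres: "{f \<in> Pi\<^sub>E I A. f i \<in> S \<and> (\<forall>j\<in>I - {i}. f j \<notin> Y (f i))} = (\<Union>a\<in>S. Pi\<^sub>E I (B a))"
    using assms(2,3) unfolding B_def by (auto simp: PiE_def Pi_def split: if_splits)
  have card_fibre: "card (Pi\<^sub>E I (B a)) = (\<Prod>j\<in>I - {i}. card (A j - Y a))" for a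
  proof -
    have "card (Pi\<^sub>E I (B a)) = card (B a i) * (\<Prod>j\<in>I - {i}. card (B a j))"
      using assms(1,2) by (simp add: card_PiE prod.remove)
    also have "(\<Prod>j\<in>I - {i}. card (B a j)) = (\<Prod>j\<in>I - {i}. card (A j - Y a))"
      by (rule prod.cong) (auto simp: B_def)
    also have "card (B a i) = 1"
      by (simp add: B_def)
    finally show ?thesis by simp
  qed
  have "finite S" using assms(2,3,4) finite_subset by blast
  moreover have "finite (Pi\<^sub>E I (B a))" for a
    using assms(1,4) by (intro finite_PiE) (auto simp: B_def)
  moreover have "Pi\<^sub>E I (B a) \<inter> Pi\<^sub>E I (B b) = {}" if "a \<noteq> b" for a b
    using that assms(2) by (auto simp: B_def PiE_def Pi_def)
  ultimately have "card (\<Union>a\<in>S. Pi\<^sub>E I (B a)) = (\<Sum>a\<in>S. card (Pi\<^sub>E I (B a)))"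
    by (intro card_UN_disjoint) auto
  then show ?thesis unfolding fibres card_fibre .
qed

section \<open>Keeping one random vertex of every packed triangle\<close>

locale packed_triangles =
  fixes V :: "'a set" and E :: "'a \<Rightarrow> 'a \<Rightarrow> bool" and TT :: "'a set set" and X :: "'a set"
  assumes finite_V: "finite V"
    and sym: "\<And>u v. u \<in> V \<Longrightarrow> v \<in> V \<Longrightarrow> E u v \<longleftrightarrow> E v u"
    and irrefl: "\<And>v. v \<in> V \<Longrightarrow> \<not> E v v"
    and K4_free: "K4_free V E"
    and packing: "packing (triangles V E) TT"
    and oct: "is_oct V E X"
begin

definition "VT = \<Union>TT"
(* The sample space of the random choice v_T = sigma T; expectations are averages over it. *)
definition "\<Omega> = (\<Pi>\<^sub>E T\<in>TT. T)"
definition "removed \<sigma> = (\<Union>T\<in>TT. T - {\<sigma> T})"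
definition "outside_triangles = {t \<in> triangles V E. \<not> t \<subseteq> VT}"

lemma TT_triangle: "T \<in> TT \<Longrightarrow> T \<in> triangles V E"
  using packing unfolding packing_def by blast

lemma TT_subset: "T \<in> TT \<Longrightarrow> T \<subseteq> V"
  using TT_triangle triangle_subset[of _ V E] by blast

lemma card_TT_elem: "T \<in> TT \<Longrightarrow> card T = 3"
  using TT_triangle card_triangle[of _ V E] by blast

lemma finite_TT_elem: "T \<in> TT \<Longrightarrow> finite T"
  using TT_triangle finite_triangle[of _ V E] by blast

lemma TT_disjoint: "T \<in> TT \<Longrightarrow> T' \<in> TT \<Longrightarrow> T \<noteq> T' \<Longrightarrow> T \<inter> T' = {}"
  using packing unfolding packing_def by blast

lemma finite_TT: "finite TT"
proof (rule finite_subset)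
  show "TT \<subseteq> Pow V" using TT_subset by blast
qed (simp add: finite_V)

lemma X_subset: "X \<subseteq> V"
  using oct unfolding is_oct_def by blast

lemma finite_X: "finite X"
  using X_subset finite_V finite_subset by blast

lemma VT_subset: "VT \<subseteq> V"
  unfolding VT_def using TT_subset by blast

lemma finite_VT: "finite VT"
  using VT_subset finite_V finite_subset by blast

lemma card_VT: "card VT = 3 * card TT"
  using card_Int_Union_packing[OF finite_V packing, of UNIV] card_TT_elem
  unfolding VT_def by simp

lemma triangle_meets_X: "t \<in> triangles V E \<Longrightarrow> t \<inter> X \<noteq> {}"
  using is_oct_meets_triangle oct by blast

lemma triangle_card_X:
  assumes "t \<in> triangles V E"
  shows "1 \<le> card (X \<inter> t)" "card (X \<inter> t) + card (t - X) = 3"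
proof -
  show "1 \<le> card (X \<inter> t)"
    using triangle_meets_X[OF assms] finite_triangle[OF assms]
    by (simp add: Suc_le_eq card_gt_0_iff Int_commute)
  show "card (X \<inter> t) + card (t - X) = 3"
    using card_Int_Diff[OF finite_triangle[OF assms], of X] card_triangle[OF assms]
    by (simp add: Int_commute)
qed

lemma choice_mem: "\<sigma> \<in> \<Omega> \<Longrightarrow> T \<in> TT \<Longrightarrow> \<sigma> T \<in> T"
  unfolding \<Omega>_def by (auto simp: PiE_def Pi_def)

lemma finite_Omega: "finite \<Omega>"
  unfolding \<Omega>_def using finite_TT finite_TT_elem by (intro finite_PiE) auto

lemma card_Omega: "card \<Omega> = 3 ^ card TT"
  unfolding \<Omega>_def using finite_TT by (simp add: card_PiE card_TT_elem)

lemma card_Int_removed: "card (S \<inter> removed \<sigma>) = (\<Sum>T\<in>TT. card (S \<inter> (T - {\<sigma> T})))"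
proof -
  have "S \<inter> removed \<sigma> = (\<Union>T\<in>TT. S \<inter> (T - {\<sigma> T}))"
    unfolding removed_def by blast
  also have "card \<dots> = (\<Sum>T\<in>TT. card (S \<inter> (T - {\<sigma> T})))"
    using finite_TT finite_TT_elem TT_disjoint by (intro card_UN_disjoint) auto
  finally show ?thesis .
qed

lemma card_removed: "\<sigma> \<in> \<Omega> \<Longrightarrow> card (removed \<sigma>) = 2 * card TT"
  using card_Int_removed[of UNIV \<sigma>] choice_mem
  by (simp add: card_TT_elem finite_TT_elem)

lemma kept_vertex: "y \<in> VT \<Longrightarrow> y \<notin> removed \<sigma> \<Longrightarrow> \<exists>T\<in>TT. y = \<sigma> T"
  unfolding VT_def removed_def by blast

definition "exposed T \<sigma> \<longleftrightarrow> (\<exists>T'\<in>TT. T' \<noteq> T \<and> \<sigma> T' \<in> X \<and> E (\<sigma> T) (\<sigma> T'))"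

lemma sum_card_kept_triangles_le:
  assumes "packing (triangles (V - removed \<sigma>) E) P"
  shows "(\<Sum>t\<in>{t \<in> P. t \<subseteq> VT}. card (t - X)) \<le> card {T \<in> TT. \<sigma> T \<notin> X \<and> exposed T \<sigma>}"
proof -
  let ?P = "{t \<in> P. t \<subseteq> VT}" and ?B = "{T \<in> TT. \<sigma> T \<notin> X \<and> exposed T \<sigma>}"
  have P: "P \<subseteq> triangles (V - removed \<sigma>) E" "\<And>t t'. t \<in> P \<Longrightarrow> t' \<in> P \<Longrightarrow> t \<noteq> t' \<Longrightarrow> t \<inter> t' = {}"
    using assms unfolding packing_def by auto
  have "finite P"
    using finite_packing_triangles[OF _ assms] finite_V by simp
  have "(\<Sum>t\<in>?P. card (t - X)) = card (\<Union>t\<in>?P. t - X)"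
    using \<open>finite P\<close> P finite_triangle[of _ "V - removed \<sigma>" E]
    by (intro card_UN_disjoint[symmetric]) auto
  also have "\<dots> \<le> card (\<sigma> ` ?B)"
  proof (rule card_mono)
    show "finite (\<sigma> ` ?B)" using finite_TT by simp
    show "(\<Union>t\<in>?P. t - X) \<subseteq> \<sigma> ` ?B"
    proof
      fix y assume "y \<in> (\<Union>t\<in>?P. t - X)"
      then obtain t where t: "t \<in> P" "t \<subseteq> VT" "y \<in> t" "y \<notin> X" by blast
      have tri: "t \<in> triangles (V - removed \<sigma>) E" using P(1) t(1) by blast
      then have "t \<subseteq> V - removed \<sigma>" by (rule triangle_subset)
      moreover obtain z where "z \<in> t" "z \<in> X"
        using triangle_meets_X triangles_mono[of "V - removed \<sigma>" V E] tri by blast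
      ultimately have "y \<in> VT - removed \<sigma>" "z \<in> VT - removed \<sigma>"
        using t by auto
      then obtain T T' where "T \<in> TT" "y = \<sigma> T" "T' \<in> TT" "z = \<sigma> T'"
        using kept_vertex by (meson DiffE)
      moreover have "E y z"
      proof (rule triangle_adj[OF tri])
        show "y \<noteq> z" using t(4) \<open>z \<in> X\<close> by blast
      qed (use sym \<open>z \<in> t\<close> t(3) in auto)
      ultimately show "y \<in> \<sigma> ` ?B"
        using \<open>z \<in> X\<close> t(4) unfolding exposed_def by auto
    qed
  qed
  also have "\<dots> \<le> card ?B"
    using finite_TT by (intro card_image_le) simp
  finally show ?thesis .
qed

definition "X_nbrs v = {x \<in> X. E v x}"
(* The probability that no triangle of TT other than T keeps an X-neighbour of v. *)
definition "avoid_prob T v = (\<Prod>T'\<in>TT - {T}. real (card (T' - X_nbrs v)) / 3)"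
(* If X meets T in one vertex, 2 gain T is the probability that the kept vertex of T is outside X
   and not exposed; otherwise the cost of T is at most (3 - rho0) / 2 = (3 - rho0) (1 - gain T). *)
definition "gain T = (if card (X \<inter> T) = 1 then (\<Sum>v\<in>T - X. avoid_prob T v) / 6 else 1 / 2)"
definition "outer_nbrs v = {u \<in> VT. E v u \<and> \<not> (\<exists>T\<in>TT. v \<in> T \<and> u \<in> T)}"

lemma card_Omega_remove: "T \<in> TT \<Longrightarrow> card \<Omega> = 3 * 3 ^ card (TT - {T})"
  using card_Suc_Diff1[OF finite_TT] card_Omega by (metis power_Suc)

lemma card_Diff_X_single: "T \<in> TT \<Longrightarrow> card (X \<inter> T) = 1 \<Longrightarrow> card (T - X) = 2"
  using card_Int_Diff[OF finite_TT_elem, of T X] card_TT_elem by (simp add: Int_commute)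

lemma card_kept_notin_X:
  assumes T: "T \<in> TT" and one: "card (X \<inter> T) = 1"
  shows "3 * real (card {\<sigma> \<in> \<Omega>. \<sigma> T \<notin> X}) = 2 * real (card \<Omega>)"
proof -
  have "{\<sigma> \<in> \<Omega>. \<sigma> T \<notin> X} = {\<sigma> \<in> \<Omega>. \<sigma> T \<in> T - X \<and> (\<forall>T'\<in>TT - {T}. \<sigma> T' \<notin> {})}"
    using choice_mem[OF _ T] by blast
  then have "card {\<sigma> \<in> \<Omega>. \<sigma> T \<notin> X} = (\<Sum>v\<in>T - X. \<Prod>T'\<in>TT - {T}. card (T' - {}))"
    unfolding \<Omega>_def using card_PiE_fibres[OF finite_TT T, of "T - X" "\<lambda>T. T" "\<lambda>_. {}"] finite_TT_elem
    by simp
  also have "(\<Prod>T'\<in>TT - {T}. card (T' - {})) = (\<Prod>T'\<in>TT - {T}. 3)"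
    by (rule prod.cong) (auto simp: card_TT_elem)
  finally show ?thesis
    using card_Diff_X_single[OF T one] card_Omega_remove[OF T] by simp
qed

lemma card_kept_unexposed:
  assumes T: "T \<in> TT" and one: "card (X \<inter> T) = 1"
  shows "real (card {\<sigma> \<in> \<Omega>. \<sigma> T \<notin> X \<and> \<not> exposed T \<sigma>}) = 2 * gain T * real (card \<Omega>)"
proof -
  define M where "M = (3::real) ^ card (TT - {T})"
  have "{\<sigma> \<in> \<Omega>. \<sigma> T \<notin> X \<and> \<not> exposed T \<sigma>}
      = {\<sigma> \<in> \<Omega>. \<sigma> T \<in> T - X \<and> (\<forall>T'\<in>TT - {T}. \<sigma> T' \<notin> X_nbrs (\<sigma> T))}"
    unfolding exposed_def X_nbrs_def using choice_mem[OF _ T] by blast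
  then have card_eq: "card {\<sigma> \<in> \<Omega>. \<sigma> T \<notin> X \<and> \<not> exposed T \<sigma>}
      = (\<Sum>v\<in>T - X. \<Prod>T'\<in>TT - {T}. card (T' - X_nbrs v))"
    unfolding \<Omega>_def using card_PiE_fibres[OF finite_TT T, of "T - X" "\<lambda>T. T" X_nbrs] finite_TT_elem
    by simp
  have "avoid_prob T v = real (\<Prod>T'\<in>TT - {T}. card (T' - X_nbrs v)) / M" for v
    unfolding avoid_prob_def M_def by (simp add: prod_dividef)
  then have "gain T = (\<Sum>v\<in>T - X. real (\<Prod>T'\<in>TT - {T}. card (T' - X_nbrs v)) / M) / 6"
    using one unfolding gain_def by simp
  also have "\<dots> = real (card {\<sigma> \<in> \<Omega>. \<sigma> T \<notin> X \<and> \<not> exposed T \<sigma>}) / M / 6"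
    unfolding card_eq of_nat_sum sum_divide_distrib ..
  finally show ?thesis
    using card_Omega_remove[OF T] unfolding M_def by simp
qed

lemma outer_nbrs_eq: "T \<in> TT \<Longrightarrow> v \<in> T \<Longrightarrow> outer_nbrs v = {u \<in> VT - T. E v u}"
  unfolding outer_nbrs_def using TT_disjoint by blast

lemma finite_outer_nbrs: "finite (outer_nbrs v)"
  unfolding outer_nbrs_def using finite_VT by simp

lemma avoid_prob_ge:
  assumes T: "T \<in> TT" and v: "v \<in> T"
  shows "exp (- (ln 3 / 2 * real (card (X \<inter> outer_nbrs v)))) \<le> avoid_prob T v"
proof -
  have split: "X \<inter> outer_nbrs v = (\<Union>T'\<in>TT - {T}. T' \<inter> X_nbrs v)"
    unfolding outer_nbrs_eq[OF T v] X_nbrs_def VT_def using TT_disjoint[OF T] v by blast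
  have "card (X \<inter> outer_nbrs v) = (\<Sum>T'\<in>TT - {T}. card (T' \<inter> X_nbrs v))"
    unfolding split
  proof (rule card_UN_disjoint)
    show "\<forall>T'\<in>TT - {T}. \<forall>T''\<in>TT - {T}. T' \<noteq> T'' \<longrightarrow> T' \<inter> X_nbrs v \<inter> (T'' \<inter> X_nbrs v) = {}"
      using TT_disjoint by blast
  qed (use finite_TT finite_TT_elem in auto)
  then have "exp (- (ln 3 / 2 * real (card (X \<inter> outer_nbrs v))))
      = (\<Prod>T'\<in>TT - {T}. exp (- (ln 3 / 2 * real (card (T' \<inter> X_nbrs v)))))"
    using finite_TT by (simp add: sum_distrib_left exp_sum flip: sum_negf)
  also have "\<dots> \<le> avoid_prob T v"
    unfolding avoid_prob_def
  proof (rule prod_mono)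
    fix T' assume T': "T' \<in> TT - {T}"
    have "v \<in> V" "v \<notin> T'" using T v T' TT_subset TT_disjoint[OF T] by auto
    then have "card {x \<in> T'. E v x} \<le> 2"
      using K4_free_card_nbrs_in_triangle[OF K4_free TT_triangle] T' by blast
    moreover have "card (T' \<inter> X_nbrs v) \<le> card {x \<in> T'. E v x}"
      using T' finite_TT_elem by (intro card_mono) (auto simp: X_nbrs_def)
    ultimately have k: "card (T' \<inter> X_nbrs v) \<le> 2" by linarith
    have "card T' = card (T' \<inter> X_nbrs v) + card (T' - X_nbrs v)"
      using T' finite_TT_elem by (intro card_Int_Diff) auto
    then have "real (card (T' - X_nbrs v)) = 3 - real (card (T' \<inter> X_nbrs v))"
      using T' card_TT_elem by simp
    then show "0 \<le> exp (- (ln 3 / 2 * real (card (T' \<inter> X_nbrs v)))) \<and>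
        exp (- (ln 3 / 2 * real (card (T' \<inter> X_nbrs v)))) \<le> real (card (T' - X_nbrs v)) / 3"
      using exp_neg_half_ln3_le[OF k] by simp
  qed
  finally show ?thesis .
qed

lemma gain_ge:
  assumes T: "T \<in> TT"
  shows "exp (- a) * (1 + a) / 3 - ln 3 / 2 * exp (- a) *
           (if card (X \<inter> T) = 1 then \<Sum>v\<in>T - X. real (card (X \<inter> outer_nbrs v)) else 0) / 6
         \<le> gain T"
proof (cases "card (X \<inter> T) = 1")
  case True
  have "exp (- a) * (1 + a) - ln 3 / 2 * exp (- a) * real (card (X \<inter> outer_nbrs v)) \<le> avoid_prob T v"
    if "v \<in> T - X" for v
    using order_trans[OF exp_ge_tangent avoid_prob_ge[OF T]] that by (simp add: algebra_simps)
  then have "(\<Sum>v\<in>T - X. exp (- a) * (1 + a) - ln 3 / 2 * exp (- a) * real (card (X \<inter> outer_nbrs v)))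
      \<le> (\<Sum>v\<in>T - X. avoid_prob T v)"
    by (rule sum_mono)
  then have "2 * (exp (- a) * (1 + a)) - ln 3 / 2 * exp (- a) * (\<Sum>v\<in>T - X. real (card (X \<inter> outer_nbrs v)))
      \<le> (\<Sum>v\<in>T - X. avoid_prob T v)"
    using card_Diff_X_single[OF T True] by (simp add: sum_subtractf sum_distrib_left)
  then show ?thesis
    unfolding gain_def by (simp only: True simp_thms if_True)
next
  case False
  have "exp (- a) * (1 + a) \<le> exp (- a) * exp a"
    by (intro mult_left_mono) auto
  then show ?thesis
    using False by (simp add: gain_def exp_minus)
qed

lemma outer_nbrs_sym: "u \<in> VT \<Longrightarrow> v \<in> VT \<Longrightarrow> u \<in> outer_nbrs v \<longleftrightarrow> v \<in> outer_nbrs u"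
  unfolding outer_nbrs_def using sym VT_subset by blast

lemma sum_X_outer_nbrs_le:
  "2 * (\<Sum>v\<in>VT - X. card (X \<inter> outer_nbrs v)) \<le> (\<Sum>v\<in>VT. card (outer_nbrs v))"
proof -
  let ?N = "VT - X" and ?XT = "X \<inter> VT"
  have "(\<Sum>v\<in>?N. card (X \<inter> outer_nbrs v)) = (\<Sum>v\<in>?N. \<Sum>x\<in>?XT. of_bool (x \<in> outer_nbrs v))"
    using finite_X by (intro sum.cong) (auto simp: outer_nbrs_def intro: arg_cong[where f = card])
  also have "\<dots> = (\<Sum>x\<in>?XT. \<Sum>v\<in>?N. of_bool (v \<in> outer_nbrs x))"
    using outer_nbrs_sym by (subst sum.swap) (intro sum.cong; auto)
  also have "\<dots> \<le> (\<Sum>x\<in>?XT. card (outer_nbrs x))"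
    using finite_VT finite_outer_nbrs by (intro sum_mono) (auto intro: card_mono)
  finally have "(\<Sum>v\<in>?N. card (X \<inter> outer_nbrs v)) \<le> (\<Sum>x\<in>?XT. card (outer_nbrs x))" .
  moreover have "(\<Sum>v\<in>?N. card (X \<inter> outer_nbrs v)) \<le> (\<Sum>v\<in>?N. card (outer_nbrs v))"
    using finite_outer_nbrs by (intro sum_mono card_mono) auto
  moreover have "(\<Sum>v\<in>?N. card (outer_nbrs v)) + (\<Sum>x\<in>?XT. card (outer_nbrs x)) = (\<Sum>v\<in>VT. card (outer_nbrs v))"
    using finite_VT by (subst sum.union_disjoint[symmetric]) (auto intro: sum.cong)
  ultimately show ?thesis by linarith
qed

lemma sum_degree_VT:
  "(\<Sum>v\<in>VT. card {u \<in> VT. E v u}) = (\<Sum>v\<in>VT. card (outer_nbrs v)) + 6 * card TT"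
proof -
  have "card {u \<in> VT. E v u} = card (outer_nbrs v) + 2" if "v \<in> VT" for v
  proof -
    obtain T where T: "T \<in> TT" "v \<in> T" using \<open>v \<in> VT\<close> unfolding VT_def by blast
    have "{u \<in> VT. E v u} = outer_nbrs v \<union> (T - {v})"
      using outer_nbrs_eq[OF T] T irrefl TT_subset triangle_adj[OF TT_triangle sym]
      unfolding VT_def by blast
    moreover have "card (T - {v}) = 2"
      using T card_TT_elem finite_TT_elem by simp
    moreover have "outer_nbrs v \<inter> (T - {v}) = {}"
      using outer_nbrs_eq[OF T] by blast
    ultimately show ?thesis
      using finite_outer_nbrs finite_TT_elem[OF T(1)] by (simp add: card_Un_disjoint)
  qed
  then have "(\<Sum>v\<in>VT. card {u \<in> VT. E v u}) = (\<Sum>v\<in>VT. card (outer_nbrs v) + 2)"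
    by (rule sum.cong[OF refl])
  also have "\<dots> = (\<Sum>v\<in>VT. card (outer_nbrs v)) + 6 * card TT"
    by (simp only: sum.distrib sum_constant card_VT) simp
  finally show ?thesis .
qed

lemma sum_single_X_outer_nbrs_le:
  "2 * (\<Sum>T\<in>TT. if card (X \<inter> T) = 1 then \<Sum>v\<in>T - X. real (card (X \<inter> outer_nbrs v)) else 0)
     \<le> real (\<Sum>v\<in>VT. card (outer_nbrs v))"
proof -
  let ?r = "\<lambda>v. real (card (X \<inter> outer_nbrs v))"
  have "(\<Sum>T\<in>TT. if card (X \<inter> T) = 1 then \<Sum>v\<in>T - X. ?r v else 0) \<le> (\<Sum>T\<in>TT. \<Sum>v\<in>T - X. ?r v)"
    by (intro sum_mono) (simp add: sum_nonneg)
  also have "\<dots> = (\<Sum>v\<in>VT - X. ?r v)"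
  proof -
    have eq: "VT - X = (\<Union>T\<in>TT. T - X)" unfolding VT_def by blast
    show ?thesis unfolding eq
    proof (rule sum.UNION_disjoint[symmetric])
      show "\<forall>T\<in>TT. \<forall>T'\<in>TT. T \<noteq> T' \<longrightarrow> (T - X) \<inter> (T' - X) = {}"
        using TT_disjoint by blast
    qed (use finite_TT finite_TT_elem in auto)
  qed
  finally show ?thesis
    using sum_X_outer_nbrs_le by (simp flip: of_nat_sum)
qed

lemma sum_gain_ge:
  "(1/3) powr (3/8 * avg_degree VT E + 1/4) * real (card TT) \<le> (\<Sum>T\<in>TT. gain T)"
proof (cases "TT = {}")
  case True
  then show ?thesis by simp
next
  case False
  define n where "n = real (card TT)"
  define D where "D = real (\<Sum>v\<in>VT. card (outer_nbrs v))"
  (* the tangent point of exp, chosen so that the first-order terms cancel *)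
  define a where "a = ln 3 * D / (8 * n)"
  define r where "r v = real (card (X \<inter> outer_nbrs v))" for v
  have n: "n > 0" unfolding n_def using False finite_TT by (simp add: card_gt_0_iff)
  have "avg_degree VT E = (D + 6 * n) / (3 * n)"
    unfolding avg_degree_def D_def n_def using sum_degree_VT card_VT
    by (simp flip: of_nat_sum)
  then have "3/8 * avg_degree VT E + 1/4 = a / ln 3 + 1"
    unfolding a_def using n by (simp add: field_simps)
  then have p: "(1/3) powr (3/8 * avg_degree VT E + 1/4) = exp (- a) / 3"
    by (simp add: powr_def ln_div algebra_simps exp_diff)
  have r_sum: "(\<Sum>T\<in>TT. if card (X \<inter> T) = 1 then \<Sum>v\<in>T - X. r v else 0) \<le> D / 2"
    using sum_single_X_outer_nbrs_le unfolding r_def D_def by simp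
  have "(1/3) powr (3/8 * avg_degree VT E + 1/4) * n
      = n * (exp (- a) * (1 + a) / 3) - ln 3 / 2 * exp (- a) * (D / 2) / 6"
    unfolding p a_def using n by (simp add: field_simps)
  also have "\<dots> \<le> n * (exp (- a) * (1 + a) / 3)
      - ln 3 / 2 * exp (- a) * (\<Sum>T\<in>TT. if card (X \<inter> T) = 1 then \<Sum>v\<in>T - X. r v else 0) / 6"
    using r_sum by (simp add: mult_left_mono divide_right_mono)
  also have "\<dots> = (\<Sum>T\<in>TT. exp (- a) * (1 + a) / 3
      - ln 3 / 2 * exp (- a) * (if card (X \<inter> T) = 1 then \<Sum>v\<in>T - X. r v else 0) / 6)"
    unfolding n_def by (simp add: sum_subtractf sum_distrib_left sum_divide_distrib)
  also have "\<dots> \<le> (\<Sum>T\<in>TT. gain T)"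
    using gain_ge unfolding r_def by (intro sum_mono) auto
  finally show ?thesis unfolding n_def .
qed

end

locale packed_triangles_approx = packed_triangles +
  fixes \<rho>0 :: real
  assumes rho_ge_1: "1 \<le> \<rho>0" and rho_le_3: "\<rho>0 \<le> 3"
begin

(* R costs 2 per triangle, minus rho0 per X-vertex it removes (these need not be paid for by X2);
   the bonus (3 - rho0) / 2 of an exposed kept vertex pays for the triangles of T' inside V(T). *)
definition "cost T \<sigma> = 2 - \<rho>0 * real (card (X \<inter> (T - {\<sigma> T})))
                        + (3 - \<rho>0) / 2 * of_bool (\<sigma> T \<notin> X \<and> exposed T \<sigma>)"

lemma packing_after_removal:
  assumes "packing (triangles (V - removed \<sigma>) E) P"
  shows "finite P" "\<And>t. t \<in> P \<Longrightarrow> t \<in> triangles V E"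
  using finite_packing_triangles[OF _ assms] finite_V assms
    triangles_mono[of "V - removed \<sigma>" V E] unfolding packing_def by auto

lemma sum_inside_cost_le:
  assumes P: "packing (triangles (V - removed \<sigma>) E) P"
  shows "(\<Sum>t\<in>{t \<in> P. t \<subseteq> VT}. 3 - \<rho>0 * real (card (X \<inter> t)))
         \<le> (3 - \<rho>0) / 2 * real (card {T \<in> TT. \<sigma> T \<notin> X \<and> exposed T \<sigma>})"
proof -
  let ?in = "{t \<in> P. t \<subseteq> VT}"
  have "(\<Sum>t\<in>?in. 3 - \<rho>0 * real (card (X \<inter> t))) \<le> (\<Sum>t\<in>?in. (3 - \<rho>0) / 2 * real (card (t - X)))"
    using triangle_card_X[OF packing_after_removal(2)[OF P]] triangle_charge_le rho_ge_1 rho_le_3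
    by (intro sum_mono) blast
  also have "\<dots> = (3 - \<rho>0) / 2 * real (\<Sum>t\<in>?in. card (t - X))"
    by (simp add: sum_distrib_left)
  also have "\<dots> \<le> (3 - \<rho>0) / 2 * real (card {T \<in> TT. \<sigma> T \<notin> X \<and> exposed T \<sigma>})"
    using sum_card_kept_triangles_le[OF P] rho_le_3 by (intro mult_left_mono) (simp_all only: of_nat_le_iff, simp)
  finally show ?thesis .
qed

lemma sum_outside_cost_le:
  assumes P: "packing (triangles (V - removed \<sigma>) E) P"
  shows "(\<Sum>t\<in>{t \<in> P. \<not> t \<subseteq> VT}. 3 - \<rho>0 * real (card (X \<inter> t)))
         \<le> (3 - \<rho>0) * real (tri_num outside_triangles)"
proof -
  let ?out = "{t \<in> P. \<not> t \<subseteq> VT}"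
  have "(\<Sum>t\<in>?out. 3 - \<rho>0 * real (card (X \<inter> t))) \<le> (\<Sum>t\<in>?out. 3 - \<rho>0)"
  proof (rule sum_mono)
    fix t assume "t \<in> ?out"
    then have "1 \<le> card (X \<inter> t)"
      using triangle_card_X(1) packing_after_removal(2)[OF P] by blast
    then show "3 - \<rho>0 * real (card (X \<inter> t)) \<le> 3 - \<rho>0"
      using rho_ge_1 by (simp add: mult_left_mono[of 1 _ \<rho>0, simplified])
  qed
  also have "\<dots> \<le> (3 - \<rho>0) * real (tri_num outside_triangles)"
  proof -
    have "finite outside_triangles"
      unfolding outside_triangles_def
      by (rule finite_subset[of _ "Pow V"]) (auto dest: triangle_subset simp: finite_V)
    moreover have "packing outside_triangles ?out"
      using P packing_after_removal(2)[OF P] unfolding packing_def outside_triangles_def by auto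
    ultimately have "real (card ?out) \<le> real (tri_num outside_triangles)"
      using tri_num_ge by simp
    then show ?thesis
      using rho_le_3 by (simp add: mult.commute mult_left_mono)
  qed
  finally show ?thesis .
qed

lemma sum_packing_cost_le:
  assumes P: "packing (triangles (V - removed \<sigma>) E) P"
  shows "(\<Sum>t\<in>P. 3 - \<rho>0 * real (card (X \<inter> t)))
         \<le> (3 - \<rho>0) / 2 * real (card {T \<in> TT. \<sigma> T \<notin> X \<and> exposed T \<sigma>})
           + (3 - \<rho>0) * real (tri_num outside_triangles)"
proof -
  have "(\<Sum>t\<in>P. 3 - \<rho>0 * real (card (X \<inter> t)))
      = (\<Sum>t\<in>{t \<in> P. t \<subseteq> VT}. 3 - \<rho>0 * real (card (X \<inter> t)))
        + (\<Sum>t\<in>{t \<in> P. \<not> t \<subseteq> VT}. 3 - \<rho>0 * real (card (X \<inter> t)))"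
    using packing_after_removal(1)[OF P]
    by (subst sum.union_disjoint[symmetric]) (auto intro: sum.cong)
  then show ?thesis
    using sum_inside_cost_le[OF P] sum_outside_cost_le[OF P] by linarith
qed

lemma sum_cost:
  assumes "\<sigma> \<in> \<Omega>"
  shows "(\<Sum>T\<in>TT. cost T \<sigma>) = real (card (removed \<sigma>)) - \<rho>0 * real (card (X \<inter> removed \<sigma>))
           + (3 - \<rho>0) / 2 * real (card {T \<in> TT. \<sigma> T \<notin> X \<and> exposed T \<sigma>})"
proof -
  have "(\<Sum>T\<in>TT. cost T \<sigma>) = (\<Sum>T\<in>TT. 2 - \<rho>0 * real (card (X \<inter> (T - {\<sigma> T}))))
      + (3 - \<rho>0) / 2 * (\<Sum>T\<in>TT. of_bool (\<sigma> T \<notin> X \<and> exposed T \<sigma>))"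
    by (simp only: cost_def sum.distrib sum_distrib_left)
  also have "(\<Sum>T\<in>TT. of_bool (\<sigma> T \<notin> X \<and> exposed T \<sigma>)) = real (card {T \<in> TT. \<sigma> T \<notin> X \<and> exposed T \<sigma>})"
    using finite_TT by (simp add: Int_def)
  also have "(\<Sum>T\<in>TT. 2 - \<rho>0 * real (card (X \<inter> (T - {\<sigma> T}))))
      = real (card (removed \<sigma>)) - \<rho>0 * real (card (X \<inter> removed \<sigma>))"
    using card_removed[OF assms] by (simp add: sum_subtractf sum_distrib_left card_Int_removed)
  finally show ?thesis .
qed

lemma card_solution_le:
  assumes \<sigma>: "\<sigma> \<in> \<Omega>"
    and P: "packing (triangles (V - removed \<sigma>) E) P"
    and Y: "is_oct (V - (removed \<sigma> \<union> \<Union>P)) E Y"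
      "real (card Y) \<le> \<rho>0 * real (oct_num (V - (removed \<sigma> \<union> \<Union>P)) E)"
  shows "real (card (removed \<sigma> \<union> \<Union>P \<union> Y))
         \<le> \<rho>0 * real (card X) + (3 - \<rho>0) * real (tri_num outside_triangles) + (\<Sum>T\<in>TT. cost T \<sigma>)"
proof -
  define R U W where "R = removed \<sigma>" and "U = \<Union>P" and "W = V - (R \<union> U)"
  have "R \<subseteq> V" unfolding R_def removed_def using TT_subset by blast
  have P_tri: "P \<subseteq> triangles (V - R) E"
    using P unfolding packing_def R_def by blast
  then have "U \<subseteq> V - R"
    unfolding U_def using triangle_subset[of _ "V - R" E] by blast
  have card_U: "card (S \<inter> U) = (\<Sum>t\<in>P. card (S \<inter> t))" for S
    unfolding U_def using card_Int_Union_packing[OF _ P] finite_V by simp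
  have "card U = (\<Sum>t\<in>P. 3)"
    using card_U[of UNIV] P_tri card_triangle[of _ "V - R" E] by (simp add: subset_iff)
  then have U: "real (card U) - \<rho>0 * real (card (X \<inter> U)) = (\<Sum>t\<in>P. 3 - \<rho>0 * real (card (X \<inter> t)))"
    by (simp add: card_U sum_subtractf sum_distrib_left)
  have "card X = card (X \<inter> R) + card (X \<inter> U) + card (X \<inter> W)"
    using card_Int_partition3[OF finite_X X_subset] \<open>U \<subseteq> V - R\<close> unfolding W_def by blast
  then have "\<rho>0 * real (card X)
      = \<rho>0 * real (card (X \<inter> R)) + \<rho>0 * real (card (X \<inter> U)) + \<rho>0 * real (card (X \<inter> W))"
    by (simp add: distrib_left)
  moreover have "real (card Y) \<le> \<rho>0 * real (card (X \<inter> W))"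
  proof -
    have "oct_num W E \<le> card (X \<inter> W)"
      using oct_num_le_Int[OF finite_V oct] unfolding W_def by blast
    then have "\<rho>0 * real (oct_num W E) \<le> \<rho>0 * real (card (X \<inter> W))"
      using rho_ge_1 by (intro mult_left_mono) simp_all
    then show ?thesis
      using Y(2) unfolding W_def R_def U_def by linarith
  qed
  moreover have "real (card (R \<union> U \<union> Y)) \<le> real (card R) + real (card U) + real (card Y)"
    using card_Un_le[of "R \<union> U" Y] card_Un_le[of R U] by linarith
  ultimately show ?thesis
    using U sum_cost[OF \<sigma>] sum_packing_cost_le[OF P] unfolding R_def U_def
    by linarith
qed

lemma cost_le_of_not_single_X:
  assumes T: "T \<in> TT" and not_one: "card (X \<inter> T) \<noteq> 1" and \<sigma>: "\<sigma> \<in> \<Omega>"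
  shows "cost T \<sigma> \<le> (3 - \<rho>0) / 2"
proof -
  have "X \<inter> T \<noteq> {}" using triangle_meets_X[OF TT_triangle[OF T]] by blast
  then have "0 < card (X \<inter> T)"
    using finite_TT_elem[OF T] by (simp add: card_gt_0_iff)
  then have two: "2 \<le> card (X \<inter> T)"
    using not_one by linarith
  have "X \<inter> (T - {\<sigma> T}) = X \<inter> T - {\<sigma> T}" by blast
  then have k: "card (X \<inter> (T - {\<sigma> T})) = card (X \<inter> T) - of_bool (\<sigma> T \<in> X)"
    using choice_mem[OF \<sigma> T] finite_TT_elem[OF T] by (simp add: card_Diff_singleton_if)
  show ?thesis
  proof (cases "\<sigma> T \<in> X")
    case True
    then have "1 \<le> real (card (X \<inter> (T - {\<sigma> T})))" using k two by simp
    then have "\<rho>0 \<le> \<rho>0 * real (card (X \<inter> (T - {\<sigma> T})))"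
      using rho_ge_1 mult_left_mono[of 1 _ \<rho>0] by simp
    moreover have "cost T \<sigma> = 2 - \<rho>0 * real (card (X \<inter> (T - {\<sigma> T})))"
      using True by (simp add: cost_def)
    ultimately show ?thesis using rho_ge_1 by argo
  next
    case False
    then have "2 \<le> real (card (X \<inter> (T - {\<sigma> T})))" using k two by simp
    then have "2 * \<rho>0 \<le> \<rho>0 * real (card (X \<inter> (T - {\<sigma> T})))"
      using rho_ge_1 mult_left_mono[of 2 _ \<rho>0] by (simp add: mult.commute)
    moreover have "cost T \<sigma> \<le> 2 - \<rho>0 * real (card (X \<inter> (T - {\<sigma> T}))) + (3 - \<rho>0) / 2"
      using rho_le_3 by (simp add: cost_def)
    ultimately show ?thesis using rho_ge_1 by argo
  qed
qed

lemma sum_cost_eq_single_X: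
  assumes T: "T \<in> TT" and one: "card (X \<inter> T) = 1"
  shows "(\<Sum>\<sigma>\<in>\<Omega>. cost T \<sigma>) = real (card \<Omega>) * (3 - \<rho>0) * (1 - gain T)"
proof -
  obtain w where w: "X \<inter> T = {w}" using one card_1_singleton_iff[of "X \<inter> T"] by auto
  define Om1 where "Om1 = {\<sigma> \<in> \<Omega>. \<sigma> T \<notin> X}"
  define Om2 where "Om2 = {\<sigma> \<in> \<Omega>. \<sigma> T \<notin> X \<and> \<not> exposed T \<sigma>}"
  have "cost T \<sigma> = 2 - \<rho>0 * of_bool (\<sigma> \<in> Om1) + (3 - \<rho>0) / 2 * (of_bool (\<sigma> \<in> Om1) - of_bool (\<sigma> \<in> Om2))"
    if "\<sigma> \<in> \<Omega>" for \<sigma>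
  proof -
    have "\<sigma> T \<in> X \<longleftrightarrow> \<sigma> T = w"
      using w choice_mem[OF that T] by blast
    then have "X \<inter> (T - {\<sigma> T}) = (if \<sigma> T \<in> X then {} else {w})"
      using w by auto
    then show ?thesis
      using that unfolding cost_def Om1_def Om2_def by simp
  qed
  then have "(\<Sum>\<sigma>\<in>\<Omega>. cost T \<sigma>) = (\<Sum>\<sigma>\<in>\<Omega>. 2 - \<rho>0 * of_bool (\<sigma> \<in> Om1)
      + (3 - \<rho>0) / 2 * (of_bool (\<sigma> \<in> Om1) - of_bool (\<sigma> \<in> Om2)))"
    by (rule sum.cong[OF refl])
  also have "\<dots> = 2 * real (card \<Omega>) - \<rho>0 * (\<Sum>\<sigma>\<in>\<Omega>. of_bool (\<sigma> \<in> Om1))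
      + (3 - \<rho>0) / 2 * ((\<Sum>\<sigma>\<in>\<Omega>. of_bool (\<sigma> \<in> Om1)) - (\<Sum>\<sigma>\<in>\<Omega>. of_bool (\<sigma> \<in> Om2)))"
    by (simp only: sum.distrib sum_subtractf sum_distrib_left[symmetric] sum_constant)
  also have "\<dots> = 2 * real (card \<Omega>) - \<rho>0 * real (card Om1) + (3 - \<rho>0) / 2 * (real (card Om1) - real (card Om2))"
    using finite_Omega by (simp add: Int_def Om1_def Om2_def)
  also have "\<dots> = real (card \<Omega>) * (3 - \<rho>0) * (1 - gain T)"
    using card_kept_notin_X[OF T one] card_kept_unexposed[OF T one]
    unfolding Om1_def Om2_def by (simp add: field_simps)
  finally show ?thesis .
qed

lemma sum_cost_le:
  assumes "T \<in> TT"
  shows "(\<Sum>\<sigma>\<in>\<Omega>. cost T \<sigma>) \<le> real (card \<Omega>) * (3 - \<rho>0) * (1 - gain T)"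
proof (cases "card (X \<inter> T) = 1")
  case True
  then show ?thesis using sum_cost_eq_single_X[OF assms] by simp
next
  case False
  then have "(\<Sum>\<sigma>\<in>\<Omega>. cost T \<sigma>) \<le> (\<Sum>\<sigma>\<in>\<Omega>. (3 - \<rho>0) / 2)"
    using cost_le_of_not_single_X[OF assms] by (intro sum_mono)
  then show ?thesis using False by (simp add: gain_def)
qed

lemma average_card_le:
  assumes P: "\<And>\<sigma>. \<sigma> \<in> \<Omega> \<Longrightarrow> packing (triangles (V - removed \<sigma>) E) (P \<sigma>)"
    and Y: "\<And>\<sigma>. \<sigma> \<in> \<Omega> \<Longrightarrow> is_oct (V - (removed \<sigma> \<union> \<Union>(P \<sigma>))) E (Y \<sigma>) \<and>
              real (card (Y \<sigma>)) \<le> \<rho>0 * real (oct_num (V - (removed \<sigma> \<union> \<Union>(P \<sigma>))) E)"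
  shows "(\<Sum>\<sigma>\<in>\<Omega>. real (card (removed \<sigma> \<union> \<Union>(P \<sigma>) \<union> Y \<sigma>))) / real (card \<Omega>)
         \<le> \<rho>0 * real (card X) + (3 - \<rho>0) * real (tri_num outside_triangles)
           + (1 - (1/3) powr (3/8 * avg_degree VT E + 1/4)) * (3 - \<rho>0) * real (card TT)"
    (is "_ \<le> ?c + (1 - ?p) * (3 - \<rho>0) * _")
proof -
  have "(\<Sum>\<sigma>\<in>\<Omega>. real (card (removed \<sigma> \<union> \<Union>(P \<sigma>) \<union> Y \<sigma>))) \<le> (\<Sum>\<sigma>\<in>\<Omega>. ?c + (\<Sum>T\<in>TT. cost T \<sigma>))"
    using card_solution_le P Y by (intro sum_mono) blast
  also have "\<dots> = real (card \<Omega>) * ?c + (\<Sum>T\<in>TT. \<Sum>\<sigma>\<in>\<Omega>. cost T \<sigma>)"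
    by (simp add: sum.distrib sum.swap[of _ \<Omega>])
  also have "\<dots> \<le> real (card \<Omega>) * ?c + (\<Sum>T\<in>TT. real (card \<Omega>) * (3 - \<rho>0) * (1 - gain T))"
    using sum_mono[OF sum_cost_le] by simp
  also have "\<dots> = real (card \<Omega>) * ?c + real (card \<Omega>) * (3 - \<rho>0) * (real (card TT) - (\<Sum>T\<in>TT. gain T))"
    by (simp add: sum_distrib_left[symmetric] sum_subtractf)
  also have "\<dots> \<le> real (card \<Omega>) * ?c + real (card \<Omega>) * (3 - \<rho>0) * (real (card TT) - ?p * real (card TT))"
    using sum_gain_ge rho_le_3 by (intro add_left_mono mult_left_mono) auto
  finally have le: "(\<Sum>\<sigma>\<in>\<Omega>. real (card (removed \<sigma> \<union> \<Union>(P \<sigma>) \<union> Y \<sigma>)))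
      \<le> real (card \<Omega>) * ?c + real (card \<Omega>) * (3 - \<rho>0) * (real (card TT) - ?p * real (card TT))" .
  have "(?c + (1 - ?p) * (3 - \<rho>0) * real (card TT)) * real (card \<Omega>)
      = real (card \<Omega>) * ?c + real (card \<Omega>) * (3 - \<rho>0) * (real (card TT) - ?p * real (card TT))"
    by (simp add: algebra_simps)
  moreover have "0 < real (card \<Omega>)" using card_Omega by simp
  ultimately show ?thesis using le by (simp add: pos_divide_le_eq)
qed

end

theorem lemma11:
  fixes V :: "'a set" and E :: "'a \<Rightarrow> 'a \<Rightarrow> bool"
    and \<T> :: "'a set set" and \<rho>0 :: real
    and Tp :: "('a set \<Rightarrow> 'a) \<Rightarrow> 'a set set"
    and X2 :: "('a set \<Rightarrow> 'a) \<Rightarrow> 'a set"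
  assumes disk: "disk_graph V E"
    and k4: "K4_free V E"
    and opt_pos: "oct_num V E > 0"
    and maxT: "maximal_packing (triangles V E) \<T>"
    and rho: "1 \<le> \<rho>0" "\<rho>0 \<le> 3"
    and Tp: "\<And>\<sigma>. \<sigma> \<in> (\<Pi>\<^sub>E T\<in>\<T>. T) \<Longrightarrow>
               maximal_packing (triangles (V - (\<Union>T\<in>\<T>. T - {\<sigma> T})) E) (Tp \<sigma>)"
    and X2: "\<And>\<sigma>. \<sigma> \<in> (\<Pi>\<^sub>E T\<in>\<T>. T) \<Longrightarrow>
               is_oct (V - ((\<Union>T\<in>\<T>. T - {\<sigma> T}) \<union> \<Union>(Tp \<sigma>))) E (X2 \<sigma>) \<and>
               real (card (X2 \<sigma>)) \<le>
                 \<rho>0 * real (oct_num (V - ((\<Union>T\<in>\<T>. T - {\<sigma> T}) \<union> \<Union>(Tp \<sigma>))) E)"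
  shows
    "(let opt = real (oct_num V E);
          \<O> = {T \<in> triangles V E. \<not> T \<subseteq> \<Union>\<T>};
          a = real (card \<T>) / opt;
          b = real (tri_num \<O>) / opt;
          d = avg_degree (\<Union>\<T>) E;
          S2 = (\<lambda>\<sigma>. (\<Union>T\<in>\<T>. T - {\<sigma> T}) \<union> \<Union>(Tp \<sigma>) \<union> X2 \<sigma>)
      in (\<Sum>\<sigma>\<in>(\<Pi>\<^sub>E T\<in>\<T>. T). real (card (S2 \<sigma>))) / real (card (\<Pi>\<^sub>E T\<in>\<T>. T))
         \<le> (\<rho>0 + (1 - (1/3) powr (3/8 * d + 1/4)) * (3 - \<rho>0) * a + (3 - \<rho>0) * b) * opt)"
proof -
  have finite_V: "finite V"
    using disk unfolding disk_graph_def by blast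
  have sym: "\<And>u v. u \<in> V \<Longrightarrow> v \<in> V \<Longrightarrow> E u v \<longleftrightarrow> E v u"
    and irrefl: "\<And>v. v \<in> V \<Longrightarrow> \<not> E v v"
    using disk unfolding disk_graph_def by (metis add.commute dist_commute)+
  obtain X where X: "is_oct V E X" "card X = oct_num V E"
    using oct_num_attained[OF finite_V] .
  interpret packed_triangles_approx V E \<T> X \<rho>0
    using finite_V sym irrefl k4 maxT X(1) rho unfolding maximal_packing_def by unfold_locales auto
  let ?O = "{T \<in> triangles V E. \<not> T \<subseteq> \<Union>\<T>}"
    and ?p = "(1/3) powr (3/8 * avg_degree (\<Union>\<T>) E + 1/4)"
    and ?opt = "real (oct_num V E)"
  have "(\<Sum>\<sigma>\<in>\<Omega>. real (card (removed \<sigma> \<union> \<Union>(Tp \<sigma>) \<union> X2 \<sigma>))) / real (card \<Omega>)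
      \<le> \<rho>0 * real (card X) + (3 - \<rho>0) * real (tri_num outside_triangles)
        + (1 - (1/3) powr (3/8 * avg_degree VT E + 1/4)) * (3 - \<rho>0) * real (card \<T>)"
    using Tp X2 unfolding maximal_packing_def by (intro average_card_le) (auto simp: \<Omega>_def removed_def)
  moreover have "(\<rho>0 + (1 - ?p) * (3 - \<rho>0) * (real (card \<T>) / ?opt) + (3 - \<rho>0) * (real (tri_num ?O) / ?opt)) * ?opt
      = \<rho>0 * ?opt + (3 - \<rho>0) * real (tri_num ?O) + (1 - ?p) * (3 - \<rho>0) * real (card \<T>)"
    using opt_pos by (simp add: field_simps)
  ultimately show ?thesis
    unfolding Let_def X(2) \<Omega>_def removed_def VT_def outside_triangles_def by simp
qed

end
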